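(* Let $G$ be a DAG, let $V^\infty\subseteq V(G)$, and let $T\subseteq V^\infty$. Let $M,Z\subseteq V(G)$ with $Z\cap T=\emptyset$. Suppose $M$ intersects every odd $T$-path in $G$ and $s_G(M)\subseteq Z\subseteq V(G)\setminus M$. Let $(G',V'^\infty):=\mathrm{torso}(G,V^\infty,Z)$. Then every node of $s_{G'}(M)$ has total degree at most one in $G'\setminus M$. Here shadows in $G'$ are taken with respect to the same terminal set $T$.
   Context: Paths are simple directed paths; a path is odd if it has an odd number of edges; a $T$-path has both ends in $T$. $\mathcal{R}_H(X)$ is the set of nodes reachable from $X$ in $H$, including $X$. For a graph $H\supseteq T$ and $M\subseteq V(H)$, the shadows are: - $f_H(M):=V(H\setminus M)\setminus\mathcal{R}_{H\setminus M}(T)$; - $r_H(M)$ is the set of nodes $v\in V(H)\setminus M$ with no path to $T$ in $H\setminus M$; - $s_H(M):=f_H(M)\cup r_H(M)$. Parity-preserving torso. Given a DAG $G$ and $Z,V^\infty\subseteq V(G)$, first form $G_0$ from $G\setminus Z$ by adding an edge $u\rightarrow v$ for every pair of distinct $u,v\in V(G)\setminus Z$ such that $G$ has an odd $u\rightarrow v$ path with all internal nodes in $Z$. Then, for every pair of distinct $u,v\in V(G)\setminus Z$ such that $G$ has an even $u\rightarrow v$ path with all internal nodes in $Z$, add a new node $x_{uv}$ and edges $u\rightarrow x_{uv}$, $x_{uv}\rightarrow v$. The result is $G'$. Set $V'^\infty:=(V^\infty\setminus Z)\cup\{\text{new nodes}\}$, and $\mathrm{torso}(G,V^\infty,Z):=(G',V'^\infty)$.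 *)

theory Defs
  imports Main
begin

type_synonym 'a digraph = "'a set \<times> ('a \<times> 'a) set"

definition is_dag :: "'a digraph \<Rightarrow> bool" where
  "is_dag H \<longleftrightarrow> finite (fst H) \<and> snd H \<subseteq> fst H \<times> fst H \<and> acyclic (snd H)"

definition dpath :: "'a digraph \<Rightarrow> 'a list \<Rightarrow> bool" where
  "dpath H xs \<longleftrightarrow> xs \<noteq> [] \<and> distinct xs \<and> set xs \<subseteq> fst H \<and>
     (\<forall>i. Suc i < length xs \<longrightarrow> (xs ! i, xs ! Suc i) \<in> snd H)"

definition path_len :: "'a list \<Rightarrow> nat" where
  "path_len xs = length xs - 1"

definition internal :: "'a list \<Rightarrow> 'a set" where
  "internal xs = set (butlast (tl xs))"

definition del_nodes :: "'a digraph \<Rightarrow> 'a set \<Rightarrow> 'a digraph" where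
  "del_nodes H M = (fst H - M, {e \<in> snd H. fst e \<notin> M \<and> snd e \<notin> M})"

definition reach :: "'a digraph \<Rightarrow> 'a set \<Rightarrow> 'a set" where
  "reach H X = {v. \<exists>xs. dpath H xs \<and> hd xs \<in> X \<and> last xs = v}"

definition f_shadow :: "'a digraph \<Rightarrow> 'a set \<Rightarrow> 'a set \<Rightarrow> 'a set" where
  "f_shadow H T M = fst (del_nodes H M) - reach (del_nodes H M) T"

definition r_shadow :: "'a digraph \<Rightarrow> 'a set \<Rightarrow> 'a set \<Rightarrow> 'a set" where
  "r_shadow H T M = {v \<in> fst H - M. \<not> (\<exists>xs. dpath (del_nodes H M) xs \<and> hd xs = v \<and> last xs \<in> T)}"

definition shadow :: "'a digraph \<Rightarrow> 'a set \<Rightarrow> 'a set \<Rightarrow> 'a set" where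
  "shadow H T M = f_shadow H T M \<union> r_shadow H T M"

definition Zpath :: "'a digraph \<Rightarrow> 'a set \<Rightarrow> 'a \<Rightarrow> 'a \<Rightarrow> 'a list \<Rightarrow> bool" where
  "Zpath G Z u v xs \<longleftrightarrow> dpath G xs \<and> hd xs = u \<and> last xs = v \<and> internal xs \<subseteq> Z"

text \<open>Parity-preserving torso. Old nodes are Inl v; the new node x_uv is Inr (u,v).\<close>
definition torso_graph :: "'a digraph \<Rightarrow> 'a set \<Rightarrow> ('a + 'a \<times> 'a) digraph" where
  "torso_graph G Z =
    (let W = fst G - Z;
         odd_pairs = {(u, v). u \<in> W \<and> v \<in> W \<and> u \<noteq> v \<and> (\<exists>xs. Zpath G Z u v xs \<and> odd (path_len xs))};
         even_pairs = {(u, v). u \<in> W \<and> v \<in> W \<and> u \<noteq> v \<and> (\<exists>xs. Zpath G Z u v xs \<and> even (path_len xs))}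
     in (Inl ` W \<union> Inr ` even_pairs,
         (\<lambda>(u, v). (Inl u, Inl v)) ` (snd (del_nodes G Z) \<union> odd_pairs)
         \<union> (\<lambda>(u, v). (Inl u, Inr (u, v))) ` even_pairs
         \<union> (\<lambda>(u, v). (Inr (u, v), Inl v)) ` even_pairs))"

definition torso_inf :: "'a digraph \<Rightarrow> 'a set \<Rightarrow> 'a set \<Rightarrow> ('a + 'a \<times> 'a) set" where
  "torso_inf G Vinf Z = Inl ` (Vinf - Z) \<union> (fst (torso_graph G Z) - Inl ` UNIV)"

definition torso :: "'a digraph \<Rightarrow> 'a set \<Rightarrow> 'a set \<Rightarrow> ('a + 'a \<times> 'a) digraph \<times> ('a + 'a \<times> 'a) set" where
  "torso G Vinf Z = (torso_graph G Z, torso_inf G Vinf Z)"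

definition total_degree :: "'a digraph \<Rightarrow> 'a \<Rightarrow> nat" where
  "total_degree H w = card {u. (u, w) \<in> snd H} + card {u. (w, u) \<in> snd H}"

end

theory Submission
  imports Defs
begin

text \<open>Since the shadow of M in G lies in Z, every old node x outside Z \<union> M lies on a path
  T \<leadsto> x \<leadsto> T in G \ M. Cutting such a path at its nodes outside Z shows that its image in
  the torso is again a T-walk avoiding M, so x is not in the shadow of M in the torso. A new
  node x_uv with both u and v outside M lies on such a walk too, via u \<rightarrow> x_uv \<rightarrow> v. The
  only remaining shadow nodes are therefore new nodes x_uv with u \<in> M or v \<in> M, and these
  keep at most one of their two incident edges in G' \ M.\<close>

lemma fst_del_nodes [simp]: "fst (del_nodes H X) = fst H - X"
  by (simp add: del_nodes_def)

lemma del_nodes_edge_iff [simp]: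
  "(a, b) \<in> snd (del_nodes H X) \<longleftrightarrow> (a, b) \<in> snd H \<and> a \<notin> X \<and> b \<notin> X"
  by (auto simp: del_nodes_def)

lemma del_nodes_wf:
  "snd H \<subseteq> fst H \<times> fst H \<Longrightarrow> snd (del_nodes H X) \<subseteq> fst (del_nodes H X) \<times> fst (del_nodes H X)"
  by (auto simp: del_nodes_def)

lemma dpath_take: "dpath H xs \<Longrightarrow> n < length xs \<Longrightarrow> dpath H (take (Suc n) xs)"
  unfolding dpath_def using set_take_subset[of "Suc n" xs] by auto

lemma dpath_drop: "dpath H xs \<Longrightarrow> n < length xs \<Longrightarrow> dpath H (drop n xs)"
  unfolding dpath_def using set_drop_subset[of n xs] by auto

lemma dpath_snoc:
  assumes "dpath H xs" "c \<notin> set xs" "c \<in> fst H" "(last xs, c) \<in> snd H"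
  shows "dpath H (xs @ [c])"
  unfolding dpath_def
proof (intro conjI allI impI)
  have "xs \<noteq> []" using assms(1) by (simp add: dpath_def)
  fix j assume j: "Suc j < length (xs @ [c])"
  show "((xs @ [c]) ! j, (xs @ [c]) ! Suc j) \<in> snd H"
  proof (cases "Suc j < length xs")
    case True
    then show ?thesis using assms(1) by (simp add: dpath_def nth_append)
  next
    case False
    with j have "j = length xs - 1" by simp
    with False \<open>xs \<noteq> []\<close> assms(4) show ?thesis by (simp add: nth_append last_conv_nth)
  qed
qed (use assms in \<open>auto simp: dpath_def\<close>)

lemma rtrancl_imp_dpath:
  assumes "(a, b) \<in> (snd H)\<^sup>*" "a \<in> fst H" "snd H \<subseteq> fst H \<times> fst H"
  shows "\<exists>xs. dpath H xs \<and> hd xs = a \<and> last xs = b"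
  using assms(1)
proof (induction rule: rtrancl_induct)
  case base
  show ?case using assms(2) by (auto simp: dpath_def intro!: exI[of _ "[a]"])
next
  case (step b c)
  then obtain xs where xs: "dpath H xs" "hd xs = a" "last xs = b" by blast
  show ?case
  proof (cases "c \<in> set xs")
    case True
    then obtain i where i: "i < length xs" "xs ! i = c" by (auto simp: in_set_conv_nth)
    have "hd (take (Suc i) xs) = a" using xs(2) by (cases xs) auto
    moreover have "last (take (Suc i) xs) = c" using i by (simp add: take_Suc_conv_app_nth)
    ultimately show ?thesis using dpath_take[OF xs(1) i(1)] by blast
  next
    case False
    have "c \<in> fst H" using step.hyps(2) assms(3) by auto
    with False xs step.hyps(2) have "dpath H (xs @ [c])" by (intro dpath_snoc) auto
    moreover have "hd (xs @ [c]) = a" using xs by (cases xs) (auto simp: dpath_def)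
    ultimately show ?thesis by (intro exI[of _ "xs @ [c]"]) simp
  qed
qed

lemma not_in_shadow:
  assumes wf: "snd H \<subseteq> fst H \<times> fst H" and v: "v \<in> fst H - M"
    and from_T: "a \<in> T" "(a, v) \<in> (snd (del_nodes H M))\<^sup>*"
    and to_T: "b \<in> T" "(v, b) \<in> (snd (del_nodes H M))\<^sup>*"
  shows "v \<notin> shadow H T M"
proof -
  have wf_M: "snd (del_nodes H M) \<subseteq> fst (del_nodes H M) \<times> fst (del_nodes H M)"
    using del_nodes_wf[OF wf] .
  have "a \<in> fst (del_nodes H M)"
    using from_T(2) v wf by (cases rule: converse_rtranclE) auto
  then have "v \<in> reach (del_nodes H M) T"
    using rtrancl_imp_dpath[OF from_T(2) _ wf_M] from_T(1) by (auto simp: reach_def)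
  moreover have "\<exists>xs. dpath (del_nodes H M) xs \<and> hd xs = v \<and> last xs \<in> T"
    using rtrancl_imp_dpath[OF to_T(2) _ wf_M] to_T(1) v by auto
  ultimately show ?thesis using v by (auto simp: shadow_def f_shadow_def r_shadow_def)
qed

lemma shadow_subset: "shadow H T M \<subseteq> fst H - M"
  by (auto simp: shadow_def f_shadow_def r_shadow_def)

lemma torso_Inl_node_iff: "Inl x \<in> fst (torso_graph G Z) \<longleftrightarrow> x \<in> fst G - Z"
  unfolding torso_graph_def Let_def by auto

lemma torso_Inr_node:
  "Inr (u, v) \<in> fst (torso_graph G Z) \<Longrightarrow>
     u \<in> fst G - Z \<and> v \<in> fst G - Z \<and> u \<noteq> v \<and> (\<exists>xs. Zpath G Z u v xs \<and> even (path_len xs))"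
  unfolding torso_graph_def Let_def by auto

lemma torso_edge_into_Inr: "(a, Inr (u, v)) \<in> snd (torso_graph G Z) \<Longrightarrow> a = Inl u"
  unfolding torso_graph_def Let_def by auto

lemma torso_edge_from_Inr: "(Inr (u, v), a) \<in> snd (torso_graph G Z) \<Longrightarrow> a = Inl v"
  unfolding torso_graph_def Let_def by auto

lemma torso_odd_edge:
  "u \<in> fst G - Z \<Longrightarrow> v \<in> fst G - Z \<Longrightarrow> u \<noteq> v \<Longrightarrow> Zpath G Z u v xs \<Longrightarrow> odd (path_len xs) \<Longrightarrow>
     (Inl u, Inl v) \<in> snd (torso_graph G Z)"
  unfolding torso_graph_def Let_def by (auto intro!: image_eqI[where x="(u, v)"])

lemma torso_even_edges:
  "u \<in> fst G - Z \<Longrightarrow> v \<in> fst G - Z \<Longrightarrow> u \<noteq> v \<Longrightarrow> Zpath G Z u v xs \<Longrightarrow> even (path_len xs) \<Longrightarrow>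
     (Inl u, Inr (u, v)) \<in> snd (torso_graph G Z) \<and> (Inr (u, v), Inl v) \<in> snd (torso_graph G Z)"
  unfolding torso_graph_def Let_def by (auto intro!: image_eqI[where x="(u, v)"])

lemma torso_wf:
  "snd G \<subseteq> fst G \<times> fst G \<Longrightarrow> snd (torso_graph G Z) \<subseteq> fst (torso_graph G Z) \<times> fst (torso_graph G Z)"
  unfolding torso_graph_def Let_def del_nodes_def by auto

lemma torso_trancl_of_Zpath:
  assumes "u \<in> fst G - Z - M" "v \<in> fst G - Z - M" "u \<noteq> v" "Zpath G Z u v xs"
  shows "(Inl u, Inl v) \<in> (snd (del_nodes (torso_graph G Z) (Inl ` M)))\<^sup>+"
proof (cases "odd (path_len xs)")
  case True
  then show ?thesis using torso_odd_edge[of u G Z v xs] assms by auto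
next
  case False
  then have "(Inl u, Inr (u, v)) \<in> snd (del_nodes (torso_graph G Z) (Inl ` M))"
    "(Inr (u, v), Inl v) \<in> snd (del_nodes (torso_graph G Z) (Inl ` M))"
    using torso_even_edges[of u G Z v xs] assms by auto
  then show ?thesis by (meson trancl.r_into_trancl trancl_into_trancl)
qed

text \<open>The prefix up to the first node after the head that lies outside Z
  is a Z-path, hence a torso edge or a pair of torso edges.\<close>

lemma torso_rtrancl_of_dpath:
  assumes "dpath (del_nodes G M) p" "hd p \<notin> Z" "last p \<notin> Z"
  shows "(Inl (hd p), Inl (last p)) \<in> (snd (del_nodes (torso_graph G Z) (Inl ` M)))\<^sup>*"
  using assms
proof (induction "length p" arbitrary: p rule: less_induct)
  case less
  have p: "p \<noteq> []" "distinct p" "set p \<subseteq> fst G - M"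
    using less.prems(1) by (auto simp: dpath_def)
  show ?case
  proof (cases "length p = 1")
    case True
    then show ?thesis by (cases p) auto
  next
    case False
    define P where "P k \<longleftrightarrow> 0 < k \<and> k < length p \<and> p ! k \<notin> Z" for k
    have "1 < length p" using False p(1) by (cases p) auto
    then have "P (length p - 1)"
      using p(1) less.prems(3) by (auto simp: P_def last_conv_nth)
    then obtain k where k: "P k" and in_Z: "\<And>i. 0 < i \<Longrightarrow> i < k \<Longrightarrow> p ! i \<in> Z"
      using LeastI_ex[of P] not_less_Least[of _ P] by (metis less_trans P_def)
    have k_bounds: "0 < k" "k < length p" and "p ! k \<notin> Z" using k by (auto simp: P_def)
    let ?q = "take (Suc k) p"
    have q_path: "dpath G ?q"
      using dpath_take[OF less.prems(1) k_bounds(2)] by (auto simp: dpath_def)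
    have "internal ?q \<subseteq> Z"
    proof
      fix x assume "x \<in> internal ?q"
      then obtain j where "j < k - 1" "x = p ! Suc j"
        using k_bounds by (auto simp: internal_def in_set_conv_nth nth_butlast nth_tl)
      then show "x \<in> Z" using in_Z[of "Suc j"] by simp
    qed
    moreover have "hd ?q = hd p" using p(1) by (cases p) auto
    moreover have "last ?q = p ! k" using k_bounds by (simp add: take_Suc_conv_app_nth)
    ultimately have "Zpath G Z (hd p) (p ! k) ?q" using q_path by (simp add: Zpath_def)
    moreover have "hd p \<noteq> p ! k"
      using p k_bounds nth_eq_iff_index_eq[OF p(2), of 0 k] by (simp add: hd_conv_nth)
    moreover have "hd p \<in> fst G - M" "p ! k \<in> fst G - M"
      using p(3) hd_in_set[OF p(1)] nth_mem[OF k_bounds(2)] by blast+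
    ultimately have head_step:
      "(Inl (hd p), Inl (p ! k)) \<in> (snd (del_nodes (torso_graph G Z) (Inl ` M)))\<^sup>+"
      using less.prems(2) \<open>p ! k \<notin> Z\<close> by (intro torso_trancl_of_Zpath) auto
    have tail_path: "dpath (del_nodes G M) (drop k p)"
      using dpath_drop[OF less.prems(1) k_bounds(2)] .
    have "(Inl (p ! k), Inl (last p)) \<in> (snd (del_nodes (torso_graph G Z) (Inl ` M)))\<^sup>*"
      using less.hyps[OF _ tail_path] k_bounds \<open>p ! k \<notin> Z\<close> less.prems(3)
      by (simp add: hd_drop_conv_nth)
    with head_step show ?thesis by simp
  qed
qed

lemma torso_T_walks_through_old_node:
  assumes "shadow G T M \<subseteq> Z" "Z \<inter> T = {}" "x \<in> fst G - Z - M"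
  shows "\<exists>a\<in>T. (Inl a, Inl x) \<in> (snd (del_nodes (torso_graph G Z) (Inl ` M)))\<^sup>*"
    and "\<exists>b\<in>T. (Inl x, Inl b) \<in> (snd (del_nodes (torso_graph G Z) (Inl ` M)))\<^sup>*"
proof -
  have "x \<notin> shadow G T M" using assms(1,3) by blast
  then obtain p q where p: "dpath (del_nodes G M) p" "hd p \<in> T" "last p = x"
    and q: "dpath (del_nodes G M) q" "hd q = x" "last q \<in> T"
    using assms(3) by (auto simp: shadow_def f_shadow_def r_shadow_def reach_def)
  have "hd p \<notin> Z" "last q \<notin> Z" "x \<notin> Z" using p(2) q(3) assms(2,3) by blast+
  then show "\<exists>a\<in>T. (Inl a, Inl x) \<in> (snd (del_nodes (torso_graph G Z) (Inl ` M)))\<^sup>*"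
    and "\<exists>b\<in>T. (Inl x, Inl b) \<in> (snd (del_nodes (torso_graph G Z) (Inl ` M)))\<^sup>*"
    using torso_rtrancl_of_dpath[OF p(1)] torso_rtrancl_of_dpath[OF q(1)] p(2,3) q(2,3)
    by auto
qed

lemma total_degree_torso_Inr:
  "total_degree (del_nodes (torso_graph G Z) (Inl ` M)) (Inr (u, v))
     \<le> (if u \<in> M then 0 else 1) + (if v \<in> M then 0 else 1)"
proof -
  let ?E = "snd (del_nodes (torso_graph G Z) (Inl ` M))"
  have "{a. (a, Inr (u, v)) \<in> ?E} \<subseteq> (if u \<in> M then {} else {Inl u})"
    by (auto dest: torso_edge_into_Inr)
  from card_mono[OF _ this] have "card {a. (a, Inr (u, v)) \<in> ?E} \<le> (if u \<in> M then 0 else 1)"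
    by (cases "u \<in> M") simp_all
  moreover have "{a. (Inr (u, v), a) \<in> ?E} \<subseteq> (if v \<in> M then {} else {Inl v})"
    by (auto dest: torso_edge_from_Inr)
  from card_mono[OF _ this] have "card {a. (Inr (u, v), a) \<in> ?E} \<le> (if v \<in> M then 0 else 1)"
    by (cases "v \<in> M") simp_all
  ultimately show ?thesis by (simp add: total_degree_def)
qed

theorem lemma2p5:
  fixes G :: "'a digraph" and Vinf T M Z :: "'a set"
    and G' :: "('a + 'a \<times> 'a) digraph" and Vinf' :: "('a + 'a \<times> 'a) set"
  assumes "is_dag G"
    and "Vinf \<subseteq> fst G" and "T \<subseteq> Vinf"
    and "M \<subseteq> fst G" and "Z \<subseteq> fst G" and "Z \<inter> T = {}"
    and "\<forall>xs. dpath G xs \<and> hd xs \<in> T \<and> last xs \<in> T \<and> odd (path_len xs) \<longrightarrow> set xs \<inter> M \<noteq> {}"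
    and "shadow G T M \<subseteq> Z" and "Z \<subseteq> fst G - M"
    and "(G', Vinf') = torso G Vinf Z"
  shows "\<forall>w \<in> shadow G' (Inl ` T) (Inl ` M). total_degree (del_nodes G' (Inl ` M)) w \<le> 1"
proof -
  have G': "G' = torso_graph G Z" using assms(10) by (simp add: torso_def)
  let ?E = "snd (del_nodes (torso_graph G Z) (Inl ` M))"
  have wf: "snd (torso_graph G Z) \<subseteq> fst (torso_graph G Z) \<times> fst (torso_graph G Z)"
    using assms(1) torso_wf[of G Z] by (simp add: is_dag_def)
  note T_walks = torso_T_walks_through_old_node[OF assms(8,6)]
  show ?thesis unfolding G'
  proof
    fix w assume w: "w \<in> shadow (torso_graph G Z) (Inl ` T) (Inl ` M)"
    have w_node: "w \<in> fst (torso_graph G Z) - Inl ` M" using shadow_subset w by (rule subsetD)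
    have no_T_walk: False if "a \<in> T" "(Inl a, w) \<in> ?E\<^sup>*" "b \<in> T" "(w, Inl b) \<in> ?E\<^sup>*" for a b
      using w not_in_shadow[OF wf w_node imageI[OF that(1)] that(2) imageI[OF that(3)] that(4)]
      by contradiction
    show "total_degree (del_nodes (torso_graph G Z) (Inl ` M)) w \<le> 1"
    proof (cases w)
      case (Inl x)
      then have "x \<in> fst G - Z - M" using w_node by (auto simp: torso_Inl_node_iff)
      with T_walks obtain a b where "a \<in> T" "(Inl a, w) \<in> ?E\<^sup>*" "b \<in> T" "(w, Inl b) \<in> ?E\<^sup>*"
        unfolding Inl by blast
      from no_T_walk[OF this] show ?thesis ..
    next
      case (Inr e)
      then obtain u v where w_def: "w = Inr (u, v)" by (cases e) auto
      then obtain xs where uv: "u \<in> fst G - Z" "v \<in> fst G - Z" "u \<noteq> v"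
        and xs: "Zpath G Z u v xs" "even (path_len xs)"
        using w_node torso_Inr_node[of u v G Z] by auto
      show ?thesis
      proof (cases "u \<in> M \<or> v \<in> M")
        case True
        then show ?thesis using total_degree_torso_Inr[of G Z M u v] by (auto simp: w_def split: if_splits)
      next
        case False
        obtain a b where a: "a \<in> T" "(Inl a, Inl u) \<in> ?E\<^sup>*" and b: "b \<in> T" "(Inl v, Inl b) \<in> ?E\<^sup>*"
          using T_walks(1)[of u] T_walks(2)[of v] uv False by blast
        have "(Inl u, w) \<in> ?E" "(w, Inl v) \<in> ?E"
          using torso_even_edges[OF uv xs] False by (auto simp: w_def)
        have "(Inl a, w) \<in> ?E\<^sup>*" using a(2) \<open>(Inl u, w) \<in> ?E\<close> by (rule rtrancl_into_rtrancl)
        moreover have "(w, Inl b) \<in> ?E\<^sup>*"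
          using \<open>(w, Inl v) \<in> ?E\<close> b(2) by (rule converse_rtrancl_into_rtrancl)
        ultimately show ?thesis using no_T_walk a(1) b(1) by blast
      qed
    qed
  qed
qed

end
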